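(* Let $\alpha\in(0,1)$ be irrational. (i) For every $n\in\mathbb N_0$ there exists a unique $(n,\alpha)$-partition of $v_{\alpha,0}$. (ii) For every $n\in\mathbb N_0$ and every $\theta\in[0,1)$ there exists a unique $(n,\alpha)$-partition of $v_{\alpha,\theta}$.
   Context: $\mathbb N_0=\{0,1,2,\ldots\}$. $v_{\alpha,\theta}(k)=\chi_{[1-\alpha,1)}(k\alpha+\theta \bmod 1)$, $k\in\mathbb Z$. With $\alpha=[a_1,a_2,\ldots]$ the continued fraction expansion ($a_n\in\mathbb N$), the words over $\{0,1\}$ are $s_{-1}=1$, $s_0=0$, $s_1=s_0^{a_1-1}s_{-1}$, $s_n=s_{n-1}^{a_n}s_{n-2}$ ($n\ge2$). For $n\in\mathbb N_0$, an $(n,\alpha)$-partition of a sequence $(f_k)_{k\in\mathbb Z}$ with $f_k\in\{0,1\}$ is a sequence $(I_j,z_j)_{j\in\mathbb Z}$ where $I_j=\{d_j,d_j+1,\ldots,d_{j+1}-1\}\subset\mathbb Z$ (with integers $d_j<d_{j+1}$), $z_j\in\{s_n,s_{n-1}\}$, $0\in I_0$, and $f_{d_j}f_{d_j+1}\cdots f_{d_{j+1}-1}=z_j$ for all $j\in\mathbb Z$. (Thus the $I_j$ tile $\mathbb Z$ and $f$ is the concatenation of the blocks $z_j$.) *)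

theory Defs
  imports Complex_Main
begin

text \<open>Continued fraction expansion alpha = [a_1, a_2, ...] of alpha in (0,1), via the Gauss map:
  cf_rem alpha 0 = alpha, cf_rem alpha (n+1) = frac (1 / cf_rem alpha n),
  and a_n = floor (1 / cf_rem alpha (n-1)) for n >= 1.\<close>
fun cf_rem :: "real \<Rightarrow> nat \<Rightarrow> real" where
  "cf_rem \<alpha> 0 = \<alpha>"
| "cf_rem \<alpha> (Suc n) = frac (1 / cf_rem \<alpha> n)"

definition cf :: "real \<Rightarrow> nat \<Rightarrow> nat" where
  "cf \<alpha> n = nat \<lfloor>1 / cf_rem \<alpha> (n - 1)\<rfloor>"

text \<open>Words with shifted index: sw alpha (k+1) is s_k, so sw alpha 0 = s_{-1}, sw alpha 1 = s_0.\<close>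
fun sw :: "real \<Rightarrow> nat \<Rightarrow> nat list" where
  "sw \<alpha> 0 = [1]"
| "sw \<alpha> (Suc 0) = [0]"
| "sw \<alpha> (Suc (Suc 0)) = concat (replicate (cf \<alpha> 1 - 1) (sw \<alpha> 1)) @ sw \<alpha> 0"
| "sw \<alpha> (Suc (Suc (Suc n))) =
     concat (replicate (cf \<alpha> (n + 2)) (sw \<alpha> (n + 2))) @ sw \<alpha> (Suc n)"

definition sword :: "real \<Rightarrow> int \<Rightarrow> nat list" where
  "sword \<alpha> k = sw \<alpha> (nat (k + 1))"

definition vseq :: "real \<Rightarrow> real \<Rightarrow> int \<Rightarrow> nat" where
  "vseq \<alpha> \<theta> k = (if 1 - \<alpha> \<le> frac (of_int k * \<alpha> + \<theta>) \<and> frac (of_int k * \<alpha> + \<theta>) < 1 then 1 else 0)"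

text \<open>An (n,alpha)-partition of f: the intervals I_j = {d j ..< d (j+1)} are encoded by the
  strictly increasing integer sequence d of left endpoints; z j is the block label.\<close>
definition is_partition :: "nat \<Rightarrow> real \<Rightarrow> (int \<Rightarrow> nat) \<Rightarrow> (int \<Rightarrow> int) \<Rightarrow> (int \<Rightarrow> nat list) \<Rightarrow> bool" where
  "is_partition n \<alpha> f d z \<longleftrightarrow>
     (\<forall>j. d j < d (j + 1)) \<and>
     (\<forall>j. z j \<in> {sword \<alpha> (int n), sword \<alpha> (int n - 1)}) \<and>
     0 \<in> {d 0 ..< d 1} \<and>
     (\<forall>j. map (\<lambda>i. f (d j + int i)) [0..<nat (d (j + 1) - d j)] = z j)"

end

theory Submission
  imports Defs
begin

text \<open>
  A partition is determined by its left endpoints, so everything is phrased in terms of cut sets: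
  sets of integers, unbounded below, such that from each cut the sequence reads one of two given
  words up to the next cut. It suffices that \<open>vseq \<alpha> \<theta>\<close> has exactly one cut set for \<open>s\<^sub>n\<close>
  and \<open>s\<^sub>n\<^sub>-\<^sub>1\<close>.

  Uniqueness passes from level \<open>n\<close> to level \<open>n + 1\<close> combinatorially: cutting every block
  \<open>s\<^sub>n\<^sub>+\<^sub>1 = s\<^sub>n\<^sup>a s\<^sub>n\<^sub>-\<^sub>1\<close> of a level \<open>n + 1\<close> cut set after each \<open>s\<^sub>n\<close> gives a level \<open>n\<close> cut
  set, and two level \<open>n + 1\<close> cut sets with the same refinement coincide, since \<open>s\<^sub>n \<noteq> s\<^sub>n\<^sub>-\<^sub>1\<close>.

  Existence comes from the rotation. At level \<open>n\<close> every cut carries a phase on a circle of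
  length \<open>L\<close>, the phase of the next cut is obtained by rotating by \<open>\<rho>\<close>, and the next block is
  \<open>s\<^sub>n\<^sub>-\<^sub>1\<close> exactly when the phase lies on the shorter of the arcs \<open>[0, L - \<rho>)\<close> and \<open>[L - \<rho>, L)\<close>.
  Inducing the rotation on a suitable interval gives the same picture one level up, with the
  ratio of the two arcs replaced by its image under the Gauss map; hence the exponent at each level
  is the next partial quotient of \<open>\<alpha>\<close>. Level 0 is the rotation by \<open>\<alpha>\<close> itself.
\<close>

text \<open>Positions \<open>k + int (i * length u)\<close> are kept as atoms for linear arithmetic.\<close>
declare of_nat_mult [simp del]

section \<open>Occurrences, blocks and cut sets\<close>

definition occurs_at :: "(int \<Rightarrow> 'a) \<Rightarrow> int \<Rightarrow> 'a list \<Rightarrow> bool" where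
  "occurs_at f k w \<longleftrightarrow> map (\<lambda>i. f (k + int i)) [0..<length w] = w"

lemma occurs_at_append:
  "occurs_at f k (u @ v) \<longleftrightarrow> occurs_at f k u \<and> occurs_at f (k + int (length u)) v"
proof -
  have "[0..<length u + length v] = [0..<length u] @ map (\<lambda>i. i + length u) [0..<length v]"
    by (simp only: map_add_upt upt_add_eq_append[of 0, simplified] add.commute)
  then have "map (\<lambda>i. f (k + int i)) [0..<length (u @ v)] =
      map (\<lambda>i. f (k + int i)) [0..<length u] @ map (\<lambda>i. f (k + int (length u) + int i)) [0..<length v]"
    by (simp add: ac_simps)
  then show ?thesis
    unfolding occurs_at_def by (simp add: append_eq_append_conv)
qed

lemma occurs_at_concat_replicate:
  "occurs_at f k (concat (replicate m w)) \<longleftrightarrow> (\<forall>j<m. occurs_at f (k + int (j * length w)) w)"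
proof (induction m arbitrary: k)
  case 0
  then show ?case by (simp add: occurs_at_def)
next
  case (Suc m)
  have "int (length w) + int (j * length w) = int (Suc j * length w)" for j
    by simp
  with Suc show ?case
    by (simp add: occurs_at_append All_less_Suc2 length_concat sum_list_replicate add.assoc)
qed

lemma occurs_at_power_append:
  "occurs_at f k (concat (replicate m u) @ v) \<longleftrightarrow>
     (\<forall>j<m. occurs_at f (k + int (j * length u)) u) \<and> occurs_at f (k + int (m * length u)) v"
  by (simp add: occurs_at_append occurs_at_concat_replicate length_concat sum_list_replicate)

lemma length_power_append: "length (concat (replicate m u) @ v) = m * length u + length v"
  by (simp add: length_concat sum_list_replicate)

lemma length_less_power_append:
  assumes "0 < m" "v \<noteq> []"
  shows "length u < length (concat (replicate m u) @ v)"
proof -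
  have "length u \<le> m * length u" "0 < length v"
    using assms by simp_all
  then show ?thesis
    unfolding length_power_append by linarith
qed

definition block_at :: "(int \<Rightarrow> 'a) \<Rightarrow> int set \<Rightarrow> int \<Rightarrow> 'a list \<Rightarrow> bool" where
  "block_at f D k w \<longleftrightarrow>
     occurs_at f k w \<and> k + int (length w) \<in> D \<and> D \<inter> {k<..<k + int (length w)} = {}"

text \<open>The left endpoints of a partition of \<open>f\<close> into the blocks \<open>u\<close> and \<open>v\<close>.\<close>
definition cut_set :: "(int \<Rightarrow> 'a) \<Rightarrow> 'a list \<Rightarrow> 'a list \<Rightarrow> int set \<Rightarrow> bool" where
  "cut_set f u v D \<longleftrightarrow> (\<forall>N. \<exists>k\<in>D. k \<le> N) \<and> (\<forall>k\<in>D. block_at f D k u \<or> block_at f D k v)"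

lemma block_atD:
  assumes "block_at f D k w"
  shows "occurs_at f k w" and "k + int (length w) \<in> D"
    and "\<And>x. k < x \<Longrightarrow> x < k + int (length w) \<Longrightarrow> x \<notin> D"
  using assms unfolding block_at_def by auto

lemma block_atI:
  assumes "occurs_at f k w" "k + int (length w) \<in> D"
    and "\<And>x. k < x \<Longrightarrow> x < k + int (length w) \<Longrightarrow> x \<notin> D"
  shows "block_at f D k w"
  using assms unfolding block_at_def by auto

lemma block_at_unique:
  assumes u: "block_at f D k u" and v: "block_at f D k v" and "u \<noteq> []" "v \<noteq> []"
  shows "u = v"
proof -
  have "\<not> length w < length w'"
    if "block_at f D k w" "block_at f D k w'" "w \<noteq> []" for w w' :: "'a list"
    using that unfolding block_at_def by auto
  then have "length u = length v"
    using assms by (meson linorder_neqE_nat)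
  then show ?thesis
    using u v unfolding block_at_def occurs_at_def by metis
qed

lemma block_at_UNIV_singleton: "block_at f UNIV k [f k]"
proof (rule block_atI)
  show "occurs_at f k [f k]"
    by (simp add: occurs_at_def)
qed simp_all

lemma cut_set_UNIV_singletons:
  assumes "\<And>k. f k \<in> {a, b}"
  shows "cut_set f [a] [b] UNIV"
  unfolding cut_set_def
proof (intro conjI allI ballI)
  show "\<exists>k\<in>UNIV. k \<le> N" for N :: int
    by auto
  show "block_at f UNIV k [a] \<or> block_at f UNIV k [b]" for k
  proof (cases "f k = a")
    case True
    then show ?thesis
      using block_at_UNIV_singleton[of f k] by simp
  next
    case False
    then have "f k = b"
      using assms[of k] by simp
    then show ?thesis
      using block_at_UNIV_singleton[of f k] by simp
  qed
qed

lemma cut_set_singletons: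
  assumes "cut_set f [a] [b] D"
  shows "D = UNIV"
proof -
  have step: "k + 1 \<in> D" if "k \<in> D" for k
  proof -
    have "block_at f D k [a] \<or> block_at f D k [b]"
      using assms that unfolding cut_set_def by blast
    then show ?thesis
      using block_atD(2) by force
  qed
  have "x \<in> D" for x
  proof -
    obtain k where "k \<in> D" "k \<le> x"
      using assms unfolding cut_set_def by blast
    from \<open>k \<le> x\<close> show ?thesis
      by (induction x rule: int_ge_induct) (use \<open>k \<in> D\<close> step in auto)
  qed
  then show ?thesis by blast
qed

section \<open>Partitions are determined by their cut sets\<close>

lemma int_Sup_mem:
  fixes X :: "int set"
  assumes "X \<noteq> {}" "bdd_above X"
  shows "Sup X \<in> X"
proof -
  obtain x where x: "x \<in> X" "Sup X - 1 < x"
    using less_cSupE[OF _ assms(1), of "Sup X - 1"] by auto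
  moreover have "x \<le> Sup X"
    using cSup_upper[OF x(1) assms(2)] .
  ultimately have "x = Sup X"
    by linarith
  then show ?thesis
    using x(1) by simp
qed

lemma int_Inf_mem:
  fixes X :: "int set"
  assumes "X \<noteq> {}" "bdd_below X"
  shows "Inf X \<in> X"
proof -
  obtain x where x: "x \<in> X" "x < Inf X + 1"
    using cInf_lessD[OF assms(1), of "Inf X + 1"] by auto
  moreover have "Inf X \<le> x"
    using cInf_lower[OF x(1) assms(2)] .
  ultimately have "x = Inf X"
    by linarith
  then show ?thesis
    using x(1) by simp
qed

lemma gap_end_unique:
  fixes a b b' :: "'a::linorder"
  assumes "a < b" "b \<in> C" "C \<inter> {a<..<b} = {}" and "a < b'" "b' \<in> C" "C \<inter> {a<..<b'} = {}"
  shows "b = b'"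
proof (rule ccontr)
  assume "b \<noteq> b'"
  then consider "b < b'" | "b' < b"
    by (meson linorder_neqE)
  then show False
    using assms by cases auto
qed

lemma int_set_greatest_below:
  fixes C :: "int set"
  assumes "\<exists>c\<in>C. c < k"
  defines "p \<equiv> Sup {c \<in> C. c < k}"
  shows "p \<in> C" "p < k" "C \<inter> {p<..<k} = {}"
proof -
  have S: "{c \<in> C. c < k} \<noteq> {}" "bdd_above {c \<in> C. c < k}"
    using assms(1) by (auto intro: bdd_aboveI[of _ k])
  then have "p \<in> {c \<in> C. c < k}"
    unfolding p_def by (rule int_Sup_mem)
  moreover have "c \<le> p" if "c \<in> C" "c < k" for c
    unfolding p_def using that S(2) by (intro cSup_upper) auto
  ultimately show "p \<in> C" "p < k" "C \<inter> {p<..<k} = {}"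
    by force+
qed

lemma int_set_least_above:
  fixes C :: "int set"
  assumes "\<exists>c\<in>C. k < c"
  defines "n \<equiv> Inf {c \<in> C. k < c}"
  shows "n \<in> C" "k < n" "C \<inter> {k<..<n} = {}"
proof -
  have S: "{c \<in> C. k < c} \<noteq> {}" "bdd_below {c \<in> C. k < c}"
    using assms(1) by (auto intro: bdd_belowI[of _ k])
  then have "n \<in> {c \<in> C. k < c}"
    unfolding n_def by (rule int_Inf_mem)
  moreover have "n \<le> c" if "c \<in> C" "k < c" for c
    unfolding n_def using that S(2) by (intro cInf_lower) auto
  ultimately show "n \<in> C" "k < n" "C \<inter> {k<..<n} = {}"
    by force+
qed

lemma int_set_enumeration:
  fixes C :: "int set"
  assumes unbounded: "\<And>N. \<exists>c\<in>C. c \<le> N" and succ: "\<And>k. k \<in> C \<Longrightarrow> \<exists>c\<in>C. k < c"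
  obtains d :: "int \<Rightarrow> int"
  where "\<And>j. d j \<in> C" "\<And>j. d j < d (j + 1)" "\<And>j. C \<inter> {d j<..<d (j + 1)} = {}"
    and "d 0 \<le> 0" "0 < d 1"
proof -
  define prv where "prv k = Sup {c \<in> C. c < k}" for k
  define nxt where "nxt k = Inf {c \<in> C. k < c}" for k
  have prv: "prv k \<in> C \<and> prv k < k \<and> C \<inter> {prv k<..<k} = {}" for k
    using int_set_greatest_below[of C k] unbounded[of "k - 1"] unfolding prv_def by force
  have nxt: "nxt k \<in> C \<and> k < nxt k \<and> C \<inter> {k<..<nxt k} = {}" if "k \<in> C" for k
    using int_set_least_above[OF succ[OF that]] unfolding nxt_def by blast
  have nxt_prv: "nxt (prv k) = k" if "k \<in> C" for k
    using prv[of k] nxt[of "prv k"] that by (metis gap_end_unique)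
  define d where "d j = (if 0 \<le> j then (nxt ^^ nat j) (prv 1) else (prv ^^ nat (- j)) (prv 1))" for j
  have "(nxt ^^ i) (prv 1) \<in> C" "(prv ^^ i) (prv 1) \<in> C" for i
    by (induction i) (simp_all add: prv nxt)
  then have d_mem: "d j \<in> C" for j
    by (simp add: d_def)
  have d_succ: "d (j + 1) = nxt (d j)" for j
  proof (cases "0 \<le> j")
    case True
    then have "nat (j + 1) = Suc (nat j)" by simp
    then show ?thesis using True by (simp add: d_def)
  next
    case False
    then have "nat (- j) = Suc (nat (- (j + 1)))" by simp
    then have "d j = prv (d (j + 1))" using False by (simp add: d_def)
    then show ?thesis using nxt_prv[OF d_mem] by simp
  qed
  show ?thesis
  proof (rule that[of d])
    show "d j \<in> C" "d j < d (j + 1)" "C \<inter> {d j<..<d (j + 1)} = {}" for j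
      using d_mem d_succ nxt by auto
    show "d 0 \<le> 0" "0 < d 1"
      using prv[of 1] nxt[of "prv 1"] d_succ[of 0] by (auto simp: d_def)
  qed
qed

lemma strict_mono_intI:
  fixes d :: "int \<Rightarrow> 'a::order"
  assumes "\<And>j. d j < d (j + 1)"
  shows "strict_mono d"
proof (rule strict_monoI)
  fix i j :: int
  assume "i < j"
  then have "i + 1 \<le> j" by simp
  then show "d i < d j"
    by (induction j rule: int_ge_induct) (use assms order.strict_trans in blast)+
qed

lemma strict_mono_range_gap:
  fixes d :: "int \<Rightarrow> int"
  assumes "strict_mono d" "x \<in> range d" "x < d (j + 1)"
  shows "x \<le> d j"
proof -
  obtain i where i: "x = d i"
    using assms(2) by blast
  then have "i \<le> j"
    using assms by (simp add: strict_mono_less)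
  then show ?thesis
    using i assms(1) by (simp add: strict_mono_less_eq)
qed

lemma strict_mono_int_below:
  fixes d :: "int \<Rightarrow> int"
  assumes "strict_mono d" "j \<le> 0"
  shows "d j \<le> d 0 + j"
  using assms(2)
proof (induction j rule: int_le_induct)
  case base
  then show ?case by simp
next
  case (step i)
  then show ?case
    using strict_monoD[OF assms(1), of "i - 1" i] by simp
qed

lemma strict_mono_enumeration_le:
  fixes d d' :: "int \<Rightarrow> int"
  assumes d: "strict_mono d" and d': "strict_mono d'" and same: "range d = range d'"
    and "d 0 \<le> 0" "0 < d' 1"
  shows "d j \<le> d' j"
proof (induction j rule: int_induct[where k = 0])
  case base
  show ?case
    using strict_mono_range_gap[OF d', of "d 0" 0] assms by auto
next
  case (step1 i)
  show ?case
  proof (rule ccontr)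
    assume "\<not> d (i + 1) \<le> d' (i + 1)"
    then have "d' (i + 1) \<le> d i"
      using strict_mono_range_gap[OF d, of "d' (i + 1)" i] same by auto
    then show False
      using step1.IH strict_monoD[OF d', of i "i + 1"] by simp
  qed
next
  case (step2 i)
  have "d (i - 1) < d' (i - 1 + 1)"
    using step2.IH strict_monoD[OF d, of "i - 1" i] by simp
  then show ?case
    using strict_mono_range_gap[OF d'] same by blast
qed

lemma sword_not_Nil: "sword \<alpha> k \<noteq> []"
proof -
  have "sw \<alpha> n \<noteq> []" for n
    by (induction \<alpha> n rule: sw.induct) auto
  then show ?thesis
    unfolding sword_def by blast
qed

lemma partition_cut_set:
  assumes "is_partition n \<alpha> f d z"
  shows "cut_set f (sword \<alpha> (int n)) (sword \<alpha> (int n - 1)) (range d)"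
proof -
  have mono: "strict_mono d"
    and words: "\<And>j. z j \<in> {sword \<alpha> (int n), sword \<alpha> (int n - 1)}"
    and blocks: "\<And>j. map (\<lambda>i. f (d j + int i)) [0..<nat (d (j + 1) - d j)] = z j"
    using assms unfolding is_partition_def by (auto intro: strict_mono_intI)
  have block: "block_at f (range d) (d j) (z j)" for j
  proof -
    have len: "d j + int (length (z j)) = d (j + 1)"
      using arg_cong[OF blocks[of j], of length] strict_monoD[OF mono, of j "j + 1"] by simp
    then have "nat (d (j + 1) - d j) = length (z j)"
      by simp
    moreover have "range d \<inter> {d j<..<d (j + 1)} = {}"
      using strict_mono_range_gap[OF mono] by fastforce
    ultimately show ?thesis
      using blocks[of j] len unfolding block_at_def occurs_at_def by auto
  qed
  then have "block_at f (range d) k (sword \<alpha> (int n)) \<or> block_at f (range d) k (sword \<alpha> (int n - 1))"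
    if k: "k \<in> range d" for k
  proof -
    obtain j where "k = d j"
      using k by blast
    then show ?thesis
      using block[of j] words[of j] by auto
  qed
  moreover have "\<exists>k\<in>range d. k \<le> N" for N
  proof -
    have "d (min 0 (N - d 0)) \<le> N"
      using strict_mono_int_below[OF mono, of "min 0 (N - d 0)"] by linarith
    then show ?thesis by blast
  qed
  ultimately show ?thesis
    unfolding cut_set_def by blast
qed

lemma cut_set_partition:
  assumes cuts: "cut_set f (sword \<alpha> (int n)) (sword \<alpha> (int n - 1)) C"
  obtains d z where "is_partition n \<alpha> f d z"
proof -
  let ?W = "{sword \<alpha> (int n), sword \<alpha> (int n - 1)}"
  have block: "\<exists>w\<in>?W. block_at f C k w" if "k \<in> C" for k
    using cuts that unfolding cut_set_def by blast
  have "\<exists>c\<in>C. k < c" if "k \<in> C" for k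
    using block[OF that] sword_not_Nil unfolding block_at_def by fastforce
  then obtain d :: "int \<Rightarrow> int" where d: "\<And>j. d j \<in> C" "\<And>j. d j < d (j + 1)"
      "\<And>j. C \<inter> {d j<..<d (j + 1)} = {}" "d 0 \<le> 0" "0 < d 1"
    using int_set_enumeration cuts unfolding cut_set_def by metis
  define z where "z j = map (\<lambda>i. f (d j + int i)) [0..<nat (d (j + 1) - d j)]" for j
  have "z j \<in> ?W" for j
  proof -
    obtain w where w: "w \<in> ?W" "block_at f C (d j) w"
      using block d(1) by blast
    have "w \<noteq> []"
      using w(1) sword_not_Nil by (metis empty_iff insert_iff)
    then have "d j < d j + int (length w)"
      by simp
    moreover have "d j + int (length w) \<in> C" "C \<inter> {d j<..<d j + int (length w)} = {}"
      using w(2) unfolding block_at_def by simp_all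
    ultimately have "d j + int (length w) = d (j + 1)"
      using d(2,3)[of j] d(1)[of "j + 1"] by (metis gap_end_unique)
    then have "nat (d (j + 1) - d j) = length w"
      by simp
    then have "z j = w"
      using w(2) unfolding z_def block_at_def occurs_at_def by simp
    then show ?thesis
      using w(1) by simp
  qed
  then have "is_partition n \<alpha> f d z"
    unfolding is_partition_def z_def using d by auto
  then show ?thesis
    by (rule that)
qed

lemma unique_cut_set_imp_unique_partition:
  assumes "cut_set f (sword \<alpha> (int n)) (sword \<alpha> (int n - 1)) C"
    and "\<And>D. cut_set f (sword \<alpha> (int n)) (sword \<alpha> (int n - 1)) D \<Longrightarrow> D = C"
  shows "\<exists>!p. is_partition n \<alpha> f (fst p) (snd p)"
proof -
  obtain d z where dz: "is_partition n \<alpha> f d z"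
    using cut_set_partition assms(1) .
  have "p = q"
    if p: "is_partition n \<alpha> f (fst p) (snd p)" and q: "is_partition n \<alpha> f (fst q) (snd q)" for p q
  proof -
    have "range (fst p) = C" "range (fst q) = C"
      using partition_cut_set[OF p] partition_cut_set[OF q] assms(2) by blast+
    moreover have "strict_mono (fst p)" "fst p 0 \<le> 0" "0 < fst p 1"
      and "strict_mono (fst q)" "fst q 0 \<le> 0" "0 < fst q 1"
      using p q unfolding is_partition_def by (auto intro: strict_mono_intI)
    ultimately have "fst p j \<le> fst q j" "fst q j \<le> fst p j" for j
      by (metis strict_mono_enumeration_le)+
    then have d: "fst p = fst q"
      by (simp add: antisym ext)
    have "snd p j = snd q j" for j
      using p q unfolding is_partition_def d by metis
    then show ?thesis
      using d by (simp add: prod_eq_iff ext)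
  qed
  then show ?thesis
    using dz by (intro ex1I[of _ "(d, z)"]) simp_all
qed

section \<open>Refining a cut set\<close>

locale refinement =
  fixes f :: "int \<Rightarrow> 'a" and u v :: "'a list" and m :: nat and D :: "int set"
  assumes u_not_Nil: "u \<noteq> []" and v_not_Nil: "v \<noteq> []" and m_pos: "0 < m"
    and cuts: "cut_set f (concat (replicate m u) @ v) u D"
begin

abbreviation W :: "'a list" where
  "W \<equiv> concat (replicate m u) @ v"

lemma W_not_Nil: "W \<noteq> []"
  using v_not_Nil by simp

definition refined :: "int set" where
  "refined = D \<union> {k + int (i * length u) | k i. k \<in> D \<and> block_at f D k W \<and> i \<le> m}"

lemma D_subset_refined: "D \<subseteq> refined"
  unfolding refined_def by blast

lemma refined_cases:
  assumes "x \<in> refined" "x \<notin> D"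
  obtains k i where "k \<in> D" "block_at f D k W" "0 < i" "i \<le> m" "x = k + int (i * length u)"
proof -
  have "x \<in> {k + int (i * length u) | k i. k \<in> D \<and> block_at f D k W \<and> i \<le> m}"
    using assms unfolding refined_def by blast
  then obtain k i where "k \<in> D" "block_at f D k W" "i \<le> m" "x = k + int (i * length u)"
    by blast
  moreover have "0 < i"
    using assms(2) calculation by (cases i) auto
  ultimately show ?thesis
    using that by blast
qed

lemma inside_W:
  assumes "0 < i" "i \<le> m"
  shows "k < k + int (i * length u)" "k + int (i * length u) < k + int (length W)"
proof -
  have "i * length u \<le> m * length u" "0 < length v"
    using assms(2) v_not_Nil by simp_all
  then have "i * length u < length W"
    unfolding length_power_append by linarith
  then show "k + int (i * length u) < k + int (length W)"
    by linarith
  show "k < k + int (i * length u)"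
    using assms(1) u_not_Nil by simp
qed

lemma refined_inside_block:
  assumes "p \<in> refined" "k \<in> D" "block_at f D k w" "w = W \<or> w = u"
    and "k < p" "p < k + int (length w)"
  shows "w = W \<and> (\<exists>i. 0 < i \<and> i \<le> m \<and> p = k + int (i * length u))"
proof -
  have "p \<notin> D"
    using block_atD(3)[OF assms(3,5,6)] .
  with assms(1) obtain k' i where k': "k' \<in> D" "block_at f D k' W" "0 < i" "i \<le> m"
    and p: "p = k' + int (i * length u)"
    by (rule refined_cases)
  have "k' < p" "p < k' + int (length W)"
    using inside_W[OF k'(3,4)] p by simp_all
  have "\<not> k < k'"
    using block_atD(3)[OF assms(3)] k'(1) \<open>k' < p\<close> assms(6) by force
  moreover have "\<not> k' < k"
    using block_atD(3)[OF k'(2)] assms(2,5) \<open>p < k' + int (length W)\<close> by force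
  ultimately have "k = k'"
    by simp
  moreover have "w \<noteq> []"
    using assms(4) u_not_Nil W_not_Nil by blast
  ultimately have "w = W"
    using block_at_unique[OF assms(3) _ _ W_not_Nil] k'(2) by simp
  then show ?thesis
    using k' p \<open>k = k'\<close> by blast
qed

lemma refined_block_u_in_W:
  assumes k: "k \<in> D" and b: "block_at f D k W" and i: "i < m"
  shows "block_at f refined (k + int (i * length u)) u"
proof (rule block_atI)
  show "occurs_at f (k + int (i * length u)) u"
    using block_atD(1)[OF b] i occurs_at_power_append by blast
  have "k + int (Suc i * length u) \<in> refined"
    unfolding refined_def
    by (intro UnI2 CollectI exI[of _ k] exI[of _ "Suc i"]) (use k b i in auto)
  then show "k + int (i * length u) + int (length u) \<in> refined"
    by (simp add: algebra_simps)
  fix p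
  assume p: "k + int (i * length u) < p" "p < k + int (i * length u) + int (length u)"
  show "p \<notin> refined"
  proof
    assume "p \<in> refined"
    have "Suc i * length u \<le> m * length u"
      using i by (intro mult_le_mono1) simp
    then have "p < k + int (length W)"
      unfolding length_power_append using p by simp
    then obtain i' where "p = k + int (i' * length u)"
      using refined_inside_block[OF \<open>p \<in> refined\<close> k b] p u_not_Nil by fastforce
    then have "i * length u < i' * length u" "i' * length u < Suc i * length u"
      using p by simp_all
    then show False
      by (metis less_Suc_eq_le mult_less_cancel2 not_less)
  qed
qed

lemma refined_block_v_in_W:
  assumes k: "k \<in> D" and b: "block_at f D k W"
  shows "block_at f refined (k + int (m * length u)) v"
proof (rule block_atI)
  show "occurs_at f (k + int (m * length u)) v"
    using block_atD(1)[OF b] occurs_at_power_append by blast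
  show "k + int (m * length u) + int (length v) \<in> refined"
    using block_atD(2)[OF b] D_subset_refined unfolding length_power_append by (auto simp: add.assoc)
  fix p
  assume p: "k + int (m * length u) < p" "p < k + int (m * length u) + int (length v)"
  show "p \<notin> refined"
  proof
    assume "p \<in> refined"
    moreover have "k < p" "p < k + int (length W)"
      using p unfolding length_power_append by (simp_all add: add.assoc)
    ultimately obtain i where "i \<le> m" "p = k + int (i * length u)"
      using refined_inside_block[OF _ k b] by blast
    moreover have "int (i * length u) \<le> int (m * length u)"
      using \<open>i \<le> m\<close> by (simp add: mult_le_mono1)
    ultimately show False
      using p(1) by linarith
  qed
qed

lemma refined_block_u:
  assumes k: "k \<in> D" and b: "block_at f D k u"
  shows "block_at f refined k u"
proof (rule block_atI)
  show "occurs_at f k u" "k + int (length u) \<in> refined"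
    using block_atD[OF b] D_subset_refined by auto
  have "u \<noteq> W"
    using length_less_power_append[OF m_pos v_not_Nil] by (metis less_not_refl)
  then show "p \<notin> refined" if "k < p" "p < k + int (length u)" for p
    using refined_inside_block[OF _ k b _ that] by blast
qed

lemma refined_cut_set: "cut_set f u v refined"
  unfolding cut_set_def
proof (intro conjI allI ballI)
  show "\<exists>k\<in>refined. k \<le> N" for N
    using cuts D_subset_refined unfolding cut_set_def by blast
  fix x
  assume x: "x \<in> refined"
  show "block_at f refined x u \<or> block_at f refined x v"
  proof (cases "x \<in> D")
    case True
    then consider "block_at f D x W" | "block_at f D x u"
      using cuts unfolding cut_set_def by blast
    then show ?thesis
      using refined_block_u_in_W[OF True, of 0] refined_block_u[OF True] m_pos by cases auto
  next
    case False
    with x obtain k i where k: "k \<in> D" "block_at f D k W" "i \<le> m" "x = k + int (i * length u)"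
      by (rule refined_cases)
    then show ?thesis
      using refined_block_u_in_W[OF k(1,2)] refined_block_v_in_W[OF k(1,2)] by (cases "i < m") auto
  qed
qed

end

locale common_refinement = r1: refinement f u v m D1 + r2: refinement f u v m D2
  for f :: "int \<Rightarrow> 'a" and u v m D1 D2 +
  assumes u_neq_v: "u \<noteq> v" and same: "r1.refined = r2.refined"
begin

lemma D1_block_u: "c \<in> D1 \<Longrightarrow> block_at f r2.refined c u"
  using r1.cuts r1.refined_block_u_in_W[of c 0] r1.refined_block_u[of c] r1.m_pos same
  unfolding cut_set_def by auto

text \<open>
  A cut of \<open>D1\<close> inside a block \<open>u\<^sup>m v\<close> of \<open>D2\<close> starting at \<open>k\<close> lies at \<open>k + i |u|\<close> with
  \<open>0 < i \<le> m\<close>. Following the blocks of \<open>D1\<close> from there (single \<open>u\<close>'s or one \<open>u\<^sup>m v\<close>) leads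
  to \<open>k + m |u|\<close>, where the common refinement would start both a \<open>u\<close> and a \<open>v\<close>.
\<close>
lemma D1_not_inside_D2:
  assumes k: "k \<in> D2" "block_at f D2 k r2.W" and i: "0 < i" "i \<le> m"
  shows "k + int (i * length u) \<notin> D1"
  using i
proof (induction "m - i" arbitrary: i)
  case 0
  then have "block_at f r2.refined (k + int (i * length u)) v"
    using r2.refined_block_v_in_W[OF k] by simp
  then show ?case
    using D1_block_u block_at_unique r1.u_not_Nil r1.v_not_Nil u_neq_v by blast
next
  case (Suc n)
  show ?case
  proof
    let ?c = "k + int (i * length u)"
    assume c: "?c \<in> D1"
    consider "block_at f D1 ?c r1.W" | "block_at f D1 ?c u"
      using r1.cuts c unfolding cut_set_def by blast
    then show False
    proof cases
      case 1
      have "block_at f r2.refined (?c + int ((m - i) * length u)) u"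
        using r1.refined_block_u_in_W[OF c 1, of "m - i"] same Suc.prems by simp
      moreover have "?c + int ((m - i) * length u) = k + int (m * length u)"
        using Suc.prems by (simp add: algebra_simps flip: of_nat_add)
      ultimately show False
        using r2.refined_block_v_in_W[OF k] block_at_unique r1.u_not_Nil r1.v_not_Nil u_neq_v
        by metis
    next
      case 2
      have "?c + int (length u) \<in> D1"
        using block_atD(2)[OF 2] .
      moreover have "?c + int (length u) = k + int ((i + 1) * length u)"
        by (simp add: algebra_simps)
      moreover have "k + int ((i + 1) * length u) \<notin> D1"
        by (rule Suc.hyps(1)) (use Suc.hyps(2) Suc.prems in auto)
      ultimately show False
        by simp
    qed
  qed
qed

lemma D1_subset_D2: "D1 \<subseteq> D2"
proof
  fix c
  assume c: "c \<in> D1"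
  show "c \<in> D2"
  proof (rule ccontr)
    assume "c \<notin> D2"
    moreover have "c \<in> r2.refined"
      using r1.D_subset_refined same c by blast
    ultimately obtain k i where "k \<in> D2" "block_at f D2 k r2.W" "0 < i" "i \<le> m"
      and "c = k + int (i * length u)"
      using r2.refined_cases by metis
    then show False
      using D1_not_inside_D2 c by blast
  qed
qed

end

lemma cut_set_power_unique:
  assumes "u \<noteq> []" "v \<noteq> []" "u \<noteq> v" "0 < m"
    and unique: "\<And>D. cut_set f u v D \<Longrightarrow> D = C"
    and "cut_set f (concat (replicate m u) @ v) u D1"
    and "cut_set f (concat (replicate m u) @ v) u D2"
  shows "D1 = D2"
proof -
  have "refinement f u v m D1" "refinement f u v m D2"
    using assms by (simp_all add: refinement_def)
  moreover from this have "refinement.refined f u v m D1 = refinement.refined f u v m D2"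
    using refinement.refined_cut_set unique by metis
  ultimately have "common_refinement f u v m D1 D2" "common_refinement f u v m D2 D1"
    using assms(3) by (simp_all add: common_refinement_def common_refinement_axioms_def)
  then show ?thesis
    using common_refinement.D1_subset_D2 by blast
qed

section \<open>Cut sets coded by a rotation\<close>

text \<open>
  Phases live on \<open>[0, L)\<close>, and the rotation by \<open>\<rho>\<close> splits it into the arcs \<open>[0, L - \<rho>)\<close> and
  \<open>[L - \<rho>, L)\<close>, which have different lengths when \<open>\<rho> / (L - \<rho>)\<close> is irrational.
  \<open>arc_ratio\<close> is the length of the short arc divided by that of the long one.
\<close>
definition in_short_arc :: "real \<Rightarrow> real \<Rightarrow> real \<Rightarrow> bool" where
  "in_short_arc L \<rho> z \<longleftrightarrow> (if L < 2 * \<rho> then z < L - \<rho> else L - \<rho> \<le> z)"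

definition circle_rotate :: "real \<Rightarrow> real \<Rightarrow> real \<Rightarrow> real" where
  "circle_rotate L \<rho> z = (if z + \<rho> < L then z + \<rho> else z + \<rho> - L)"

definition arc_ratio :: "real \<Rightarrow> real \<Rightarrow> real" where
  "arc_ratio L \<rho> = (if L < 2 * \<rho> then (L - \<rho>) / \<rho> else \<rho> / (L - \<rho>))"

text \<open>The invariant of the induction over the levels \<open>n\<close>.\<close>
locale rotation_coding =
  fixes f :: "int \<Rightarrow> 'a" and C :: "int set" and Z :: "int \<Rightarrow> real" and L \<rho> :: real
    and u v :: "'a list"
  assumes rho_pos: "0 < \<rho>" and rho_less: "\<rho> < L" and irrational: "\<rho> / (L - \<rho>) \<notin> \<rat>"
    and u_not_Nil: "u \<noteq> []" and v_not_Nil: "v \<noteq> []" and u_neq_v: "u \<noteq> v"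
    and Z_range: "k \<in> C \<Longrightarrow> 0 \<le> Z k \<and> Z k < L"
    and block: "k \<in> C \<Longrightarrow> block_at f C k (if in_short_arc L \<rho> (Z k) then v else u)"
    and Z_next: "k \<in> C \<Longrightarrow>
      Z (k + int (length (if in_short_arc L \<rho> (Z k) then v else u))) = circle_rotate L \<rho> (Z k)"
    and unbounded: "\<exists>k\<in>C. k \<le> N"
    and unique: "cut_set f u v D \<Longrightarrow> D = C"
begin

definition \<delta> :: real where
  "\<delta> = (if L < 2 * \<rho> then \<rho> - L else \<rho>)"

lemma cut_set: "cut_set f u v C"
  unfolding cut_set_def using unbounded block by metis

lemma long_arc_block:
  assumes k: "k \<in> C" and long: "\<not> in_short_arc L \<rho> (Z k)"
  shows "block_at f C k u" "k + int (length u) \<in> C" "Z (k + int (length u)) = Z k + \<delta>"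
proof -
  show b: "block_at f C k u"
    using block[OF k] long by simp
  show "k + int (length u) \<in> C"
    using block_atD(2)[OF b] .
  have "circle_rotate L \<rho> (Z k) = Z k + \<delta>"
    using long Z_range[OF k] unfolding circle_rotate_def \<delta>_def in_short_arc_def by auto
  then show "Z (k + int (length u)) = Z k + \<delta>"
    using Z_next[OF k] long by simp
qed

lemma short_arc_block:
  assumes k: "k \<in> C" and short: "in_short_arc L \<rho> (Z k)"
  shows "block_at f C k v" "k + int (length v) \<in> C" "Z (k + int (length v)) = circle_rotate L \<rho> (Z k)"
proof -
  show b: "block_at f C k v"
    using block[OF k] short by simp
  show "k + int (length v) \<in> C"
    using block_atD(2)[OF b] .
  show "Z (k + int (length v)) = circle_rotate L \<rho> (Z k)"
    using Z_next[OF k] short by simp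
qed

lemma long_arc_run:
  assumes k: "k \<in> C" and long: "\<forall>j<i. \<not> in_short_arc L \<rho> (Z k + real j * \<delta>)"
  shows "k + int (i * length u) \<in> C \<and> Z (k + int (i * length u)) = Z k + real i * \<delta>
    \<and> (\<forall>j<i. occurs_at f (k + int (j * length u)) u)
    \<and> (\<forall>x\<in>C. k < x \<and> x < k + int (i * length u) \<longrightarrow> (\<exists>j. 0 < j \<and> j < i \<and> x = k + int (j * length u)))"
  using long
proof (induction i)
  case 0
  then show ?case
    using k by simp
next
  case (Suc i)
  let ?p = "k + int (i * length u)"
  have IH: "?p \<in> C" "Z ?p = Z k + real i * \<delta>" "\<forall>j<i. occurs_at f (k + int (j * length u)) u"
    "\<forall>x\<in>C. k < x \<and> x < ?p \<longrightarrow> (\<exists>j. 0 < j \<and> j < i \<and> x = k + int (j * length u))"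
    using Suc by auto
  have "\<not> in_short_arc L \<rho> (Z ?p)"
    using Suc.prems IH(2) by simp
  note next_u = long_arc_block[OF IH(1) this]
  have next_pos: "k + int (Suc i * length u) = ?p + int (length u)"
    by (simp add: algebra_simps)
  have "k + int (Suc i * length u) \<in> C"
    unfolding next_pos by (rule next_u(2))
  moreover have "Z (k + int (Suc i * length u)) = Z k + real (Suc i) * \<delta>"
    using next_u(3) IH(2) next_pos by (simp add: algebra_simps)
  moreover have "\<forall>j<Suc i. occurs_at f (k + int (j * length u)) u"
    using IH(3) block_atD(1)[OF next_u(1)] less_Suc_eq by auto
  moreover have "\<exists>j. 0 < j \<and> j < Suc i \<and> x = k + int (j * length u)"
    if "x \<in> C" "k < x" "x < k + int (Suc i * length u)" for x
  proof (cases "x < ?p")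
    case True
    then show ?thesis
      using IH(4) that(1,2) less_SucI by blast
  next
    case False
    have "x \<le> ?p"
      using block_atD(3)[OF next_u(1), of x] that next_pos False by linarith
    then have "x = ?p"
      using False by simp
    moreover have "0 < i"
      using \<open>x = ?p\<close> that(2) by (cases i) auto
    ultimately show ?thesis
      by blast
  qed
  ultimately show ?case
    by blast
qed

lemma run_to_short_arc:
  assumes k: "k \<in> C" and long: "\<forall>j<m. \<not> in_short_arc L \<rho> (Z k + real j * \<delta>)"
    and short: "in_short_arc L \<rho> (Z k + real m * \<delta>)"
  defines "W \<equiv> concat (replicate m u) @ v"
  shows "occurs_at f k W" and "k + int (length W) \<in> C"
    and "Z (k + int (length W)) = circle_rotate L \<rho> (Z k + real m * \<delta>)"
    and "\<And>x. x \<in> C \<Longrightarrow> k < x \<Longrightarrow> x < k + int (length W) \<Longrightarrow>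
      \<exists>j. 0 < j \<and> j \<le> m \<and> Z x = Z k + real j * \<delta>"
proof -
  let ?p = "k + int (m * length u)"
  note run = long_arc_run[OF k long]
  have "in_short_arc L \<rho> (Z ?p)"
    using run short by simp
  note next_v = short_arc_block[OF conjunct1[OF run] this]
  have end_W: "k + int (length W) = ?p + int (length v)"
    unfolding W_def length_power_append by simp
  show "occurs_at f k W"
    unfolding W_def occurs_at_power_append using run block_atD(1)[OF next_v(1)] by blast
  show "k + int (length W) \<in> C"
    unfolding end_W by (rule next_v(2))
  show "Z (k + int (length W)) = circle_rotate L \<rho> (Z k + real m * \<delta>)"
    unfolding end_W using next_v(3) run by simp
  fix x
  assume x: "x \<in> C" "k < x" "x < k + int (length W)"
  have "x \<le> ?p"
    using block_atD(3)[OF next_v(1), of x] x end_W by linarith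
  then consider "x < ?p" | "x = ?p"
    by linarith
  then show "\<exists>j. 0 < j \<and> j \<le> m \<and> Z x = Z k + real j * \<delta>"
  proof cases
    case 1
    then obtain j where j: "0 < j" "j < m" "x = k + int (j * length u)"
      using run x(1,2) by blast
    then have "Z x = Z k + real j * \<delta>"
      using long_arc_run[OF k, of j] long by simp
    then show ?thesis
      using j by auto
  next
    case 2
    have "0 < m"
      using 2 x(2) by (cases m) auto
    then show ?thesis
      using 2 run by auto
  qed
qed

end

text \<open>
  Inducing the rotation on the phases satisfying \<open>P\<close>. The hypotheses are the arithmetic of the
  first return to \<open>P\<close>: from a phase \<open>z\<close> in \<open>P\<close> one comes back after one step \<open>u\<close> or after
  \<open>m\<close> steps \<open>u\<close> and one step \<open>v\<close>, according as the shifted phase \<open>z - c\<close> is on the short arc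
  of \<open>[0, L')\<close> or not, and the shifted phase moves by the rotation of \<open>[0, L')\<close> by \<open>\<rho>'\<close>.
\<close>
locale first_return = rotation_coding +
  fixes P :: "real \<Rightarrow> bool" and c L' \<rho>' :: real and m :: nat
  assumes m_pos: "0 < m"
    and rho'_pos: "0 < \<rho>'" and rho'_less: "\<rho>' < L'" and irrational': "\<rho>' / (L' - \<rho>') \<notin> \<rat>"
    and induced_range: "\<And>z. 0 \<le> z \<Longrightarrow> z < L \<Longrightarrow> P z \<Longrightarrow> 0 \<le> z - c \<and> z - c < L'"
    and induced_short: "\<And>z. 0 \<le> z \<Longrightarrow> z < L \<Longrightarrow> P z \<Longrightarrow> in_short_arc L' \<rho>' (z - c) \<Longrightarrow>
      \<not> in_short_arc L \<rho> z \<and> P (z + \<delta>) \<and> circle_rotate L' \<rho>' (z - c) = z + \<delta> - c"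
    and induced_long: "\<And>z. 0 \<le> z \<Longrightarrow> z < L \<Longrightarrow> P z \<Longrightarrow> \<not> in_short_arc L' \<rho>' (z - c) \<Longrightarrow>
      (\<forall>j<m. \<not> in_short_arc L \<rho> (z + real j * \<delta>)) \<and> in_short_arc L \<rho> (z + real m * \<delta>)
      \<and> (\<forall>j. 0 < j \<and> j \<le> m \<longrightarrow> \<not> P (z + real j * \<delta>))
      \<and> circle_rotate L' \<rho>' (z - c) = circle_rotate L \<rho> (z + real m * \<delta>) - c"
    and reaches_short_arc: "\<And>z. 0 \<le> z \<Longrightarrow> z < L \<Longrightarrow> \<not> P z \<Longrightarrow> \<exists>i<m. in_short_arc L \<rho> (z + real i * \<delta>)"
    and short_arc_enters: "\<And>z. 0 \<le> z \<Longrightarrow> z < L \<Longrightarrow> in_short_arc L \<rho> z \<Longrightarrow> P (circle_rotate L \<rho> z)"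
begin

definition C' :: "int set" where
  "C' = {k \<in> C. P (Z k)}"

abbreviation W :: "'a list" where
  "W \<equiv> concat (replicate m u) @ v"

lemma induced_block_short:
  assumes k: "k \<in> C'" and short: "in_short_arc L' \<rho>' (Z k - c)"
  shows "block_at f C' k u" "Z (k + int (length u)) - c = circle_rotate L' \<rho>' (Z k - c)"
proof -
  have kC: "k \<in> C" and Pk: "P (Z k)"
    using k by (auto simp: C'_def)
  have long: "\<not> in_short_arc L \<rho> (Z k)" and P_next: "P (Z k + \<delta>)"
    and rot: "circle_rotate L' \<rho>' (Z k - c) = Z k + \<delta> - c"
    using induced_short Z_range[OF kC] Pk short by auto
  note next_u = long_arc_block[OF kC long]
  show "block_at f C' k u"
  proof (rule block_atI)
    show "occurs_at f k u"
      using block_atD(1)[OF next_u(1)] .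
    show "k + int (length u) \<in> C'"
      using next_u(2,3) P_next by (simp add: C'_def)
    show "x \<notin> C'" if "k < x" "x < k + int (length u)" for x
      using block_atD(3)[OF next_u(1) that] by (simp add: C'_def)
  qed
  show "Z (k + int (length u)) - c = circle_rotate L' \<rho>' (Z k - c)"
    using next_u(3) rot by simp
qed

lemma induced_block_long:
  assumes k: "k \<in> C'" and long: "\<not> in_short_arc L' \<rho>' (Z k - c)"
  shows "block_at f C' k W" "Z (k + int (length W)) - c = circle_rotate L' \<rho>' (Z k - c)"
proof -
  have kC: "k \<in> C" and Pk: "P (Z k)"
    using k by (auto simp: C'_def)
  have run: "\<forall>j<m. \<not> in_short_arc L \<rho> (Z k + real j * \<delta>)"
    and short: "in_short_arc L \<rho> (Z k + real m * \<delta>)"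
    and outside: "\<And>j. 0 < j \<Longrightarrow> j \<le> m \<Longrightarrow> \<not> P (Z k + real j * \<delta>)"
    and rot: "circle_rotate L' \<rho>' (Z k - c) = circle_rotate L \<rho> (Z k + real m * \<delta>) - c"
    using induced_long Z_range[OF kC] Pk long by auto
  note W = run_to_short_arc[OF kC run short]
  have "k + int (m * length u) \<in> C" "Z (k + int (m * length u)) = Z k + real m * \<delta>"
    using long_arc_run[OF kC run] by auto
  then have "0 \<le> Z k + real m * \<delta>" "Z k + real m * \<delta> < L"
    using Z_range by force+
  then have "P (Z (k + int (length W)))"
    using W(3) short_arc_enters short by simp
  show "block_at f C' k W"
  proof (rule block_atI)
    show "occurs_at f k W"
      using W(1) .
    show "k + int (length W) \<in> C'"
      using W(2) \<open>P (Z (k + int (length W)))\<close> by (simp add: C'_def)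
    show "x \<notin> C'" if "k < x" "x < k + int (length W)" for x
      using W(4)[OF _ that] outside by (auto simp: C'_def)
  qed
  show "Z (k + int (length W)) - c = circle_rotate L' \<rho>' (Z k - c)"
    using W(3) rot by simp
qed

lemma induced_unbounded: "\<exists>k\<in>C'. k \<le> N"
proof -
  obtain k where kC: "k \<in> C" and kN: "k \<le> N - int (length W)"
    using unbounded by blast
  show ?thesis
  proof (cases "P (Z k)")
    case True
    then show ?thesis
      using kC kN by (auto simp: C'_def)
  next
    case False
    then obtain i1 where "i1 < m" and short1: "in_short_arc L \<rho> (Z k + real i1 * \<delta>)"
      using reaches_short_arc Z_range[OF kC] by blast
    define i where "i = (LEAST i. in_short_arc L \<rho> (Z k + real i * \<delta>))"
    have short: "in_short_arc L \<rho> (Z k + real i * \<delta>)"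
      unfolding i_def using short1 by (rule LeastI)
    have "i \<le> i1"
      unfolding i_def using short1 by (rule Least_le)
    then have "i < m"
      using \<open>i1 < m\<close> by simp
    have run: "\<forall>j<i. \<not> in_short_arc L \<rho> (Z k + real j * \<delta>)"
      unfolding i_def by (blast dest: not_less_Least)
    let ?p = "k + int (i * length u)"
    have p: "?p \<in> C" "Z ?p = Z k + real i * \<delta>"
      using long_arc_run[OF kC run] by auto
    then have "in_short_arc L \<rho> (Z ?p)"
      using short by simp
    note next_v = short_arc_block[OF p(1) this]
    have "?p + int (length v) \<in> C'"
      using next_v(2,3) short_arc_enters Z_range[OF p(1)] \<open>in_short_arc L \<rho> (Z ?p)\<close> by (simp add: C'_def)
    moreover have "i * length u \<le> m * length u"
      using \<open>i < m\<close> by simp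
    then have "?p + int (length v) \<le> N"
      using kN length_power_append[of m u v] by linarith
    ultimately show ?thesis
      by blast
  qed
qed

lemma induced_cut_set: "cut_set f W u C'"
  unfolding cut_set_def
proof (intro conjI allI ballI)
  show "\<exists>k\<in>C'. k \<le> N" for N
    by (rule induced_unbounded)
  show "block_at f C' k W \<or> block_at f C' k u" if "k \<in> C'" for k
    using induced_block_short[OF that] induced_block_long[OF that] by blast
qed

theorem induced_rotation_coding: "rotation_coding f C' (\<lambda>k. Z k - c) L' \<rho>' W u"
proof
  show "0 < \<rho>'" "\<rho>' < L'" "\<rho>' / (L' - \<rho>') \<notin> \<rat>"
    using rho'_pos rho'_less irrational' .
  show "W \<noteq> []" "u \<noteq> []"
    using u_not_Nil v_not_Nil by simp_all
  show "W \<noteq> u"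
    using length_less_power_append[OF m_pos v_not_Nil] by (metis less_not_refl)
  show "0 \<le> Z k - c \<and> Z k - c < L'" if "k \<in> C'" for k
    using that induced_range Z_range by (auto simp: C'_def)
  show "block_at f C' k (if in_short_arc L' \<rho>' (Z k - c) then u else W)" if "k \<in> C'" for k
    using that induced_block_short induced_block_long by simp
  show "Z (k + int (length (if in_short_arc L' \<rho>' (Z k - c) then u else W))) - c =
      circle_rotate L' \<rho>' (Z k - c)" if "k \<in> C'" for k
    using that induced_block_short induced_block_long by simp
  show "\<exists>k\<in>C'. k \<le> N" for N
    by (rule induced_unbounded)
  show "D = C'" if "cut_set f W u D" for D
    using cut_set_power_unique[OF u_not_Nil v_not_Nil u_neq_v m_pos unique that induced_cut_set] .
qed

end

lemma irrational_floor_multiples: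
  fixes x t :: real
  assumes "x \<notin> \<rat>" "1 < x" "0 < t"
  defines "m \<equiv> nat \<lfloor>x\<rfloor>"
  shows "0 < m" "real m * t < x * t" "x * t < real m * t + t" "frac x = x - real m"
    and "\<And>j. j < m \<Longrightarrow> real j * t + t \<le> real m * t"
    and "\<And>j. 0 < j \<Longrightarrow> t \<le> real j * t"
proof -
  have "1 \<le> \<lfloor>x\<rfloor>"
    using assms(2) by (simp add: le_floor_iff)
  then have m: "real m = of_int \<lfloor>x\<rfloor>"
    by (simp add: m_def)
  show "0 < m"
    using \<open>1 \<le> \<lfloor>x\<rfloor>\<close> by (simp add: m_def)
  have "of_int \<lfloor>x\<rfloor> \<noteq> x"
    using assms(1) by (metis Rats_of_int)
  then have "real m < x" "x < real m + 1"
    unfolding m using of_int_floor_le[of x] by linarith+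
  then show "real m * t < x * t" "x * t < real m * t + t"
    using mult_strict_right_mono[OF _ assms(3)] by (fastforce simp: distrib_right)+
  show "frac x = x - real m"
    unfolding m frac_def ..
  show "real j * t + t \<le> real m * t" if "j < m" for j
    using mult_right_mono[of "real j + 1" "real m" t] that assms(3) by (simp add: distrib_right)
  show "t \<le> real j * t" if "0 < j" for j
    using mult_right_mono[of 1 "real j" t] that assms(3) by simp
qed

context rotation_coding
begin

lemma L_neq_2rho: "L \<noteq> 2 * \<rho>"
proof
  assume "L = 2 * \<rho>"
  then have "\<rho> / (L - \<rho>) = 1"
    using rho_pos by simp
  then show False
    using irrational by simp
qed

text \<open>
  Short arc \<open>[0, s)\<close> with \<open>s = L - \<rho>\<close>: off it the phase drops by \<open>s\<close>, and the first return to
  \<open>[m s, L)\<close> is a rotation of \<open>[0, L - m s)\<close> by \<open>\<rho> - m s\<close>.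
\<close>
lemma first_return_left:
  assumes "L < 2 * \<rho>"
  defines "s \<equiv> L - \<rho>"
  defines "m \<equiv> nat \<lfloor>\<rho> / s\<rfloor>"
  shows "first_return f C Z L \<rho> u v (\<lambda>z. real m * s \<le> z) (real m * s) (L - real m * s)
    (\<rho> - real m * s) m"
proof -
  have s: "0 < s" "s < \<rho>" "L = \<rho> + s"
    using rho_less assms(1) by (simp_all add: s_def)
  have q: "\<rho> / s \<notin> \<rat>"
    using irrational by (simp add: s_def)
  have "1 < \<rho> / s"
    using s by simp
  note fl = irrational_floor_multiples[OF q this s(1), folded m_def]
  have ms: "0 \<le> real m * s" "real m * s < \<rho>" "\<rho> < real m * s + s"
    using fl(2,3) s(1) by simp_all
  have shift_eq: "\<delta> = - s"
    using assms(1) by (simp add: \<delta>_def s_def)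
  have short: "in_short_arc L \<rho> z \<longleftrightarrow> z < s" for z
    using assms(1) by (simp add: in_short_arc_def s_def)
  have rot: "circle_rotate L \<rho> z = (if z < s then z + \<rho> else z - s)" for z
    by (simp add: circle_rotate_def s)
  define \<rho>' where "\<rho>' = \<rho> - real m * s"
  define L' where "L' = L - real m * s"
  have \<rho>': "0 < \<rho>'" "\<rho>' < s" "L' = s + \<rho>'"
    using ms s by (simp_all add: \<rho>'_def L'_def)
  have short': "in_short_arc L' \<rho>' y \<longleftrightarrow> s \<le> y" for y
    using \<rho>' by (simp add: in_short_arc_def)
  have rot': "circle_rotate L' \<rho>' y = (if y < s then y + \<rho>' else y - s)" for y
    using \<rho>' by (simp add: circle_rotate_def)
  have "first_return f C Z L \<rho> u v (\<lambda>z. real m * s \<le> z) (real m * s) L' \<rho>' m"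
  proof (intro first_return.intro first_return_axioms.intro)
    show "rotation_coding f C Z L \<rho> u v"
      by (rule rotation_coding_axioms)
    show "0 < m" "0 < \<rho>'" "\<rho>' < L'"
      using fl(1) \<rho>' s by simp_all
    have "\<rho>' / (L' - \<rho>') = \<rho> / s - real m"
      using s(1) \<rho>' by (simp add: \<rho>'_def field_simps)
    then show "\<rho>' / (L' - \<rho>') \<notin> \<rat>"
      using q by (metis Rats_diff_iff Rats_of_nat)
    fix z :: real
    assume z: "0 \<le> z" "z < L"
    show "real m * s \<le> z \<Longrightarrow> 0 \<le> z - real m * s \<and> z - real m * s < L'"
      using z by (simp add: L'_def)
    show "\<not> in_short_arc L \<rho> z \<and> real m * s \<le> z + \<delta>
        \<and> circle_rotate L' \<rho>' (z - real m * s) = z + \<delta> - real m * s"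
      if "real m * s \<le> z" "in_short_arc L' \<rho>' (z - real m * s)"
      using that ms by (simp add: short short' rot' shift_eq) (use ms(1) in linarith)
    show "(\<forall>j<m. \<not> in_short_arc L \<rho> (z + real j * \<delta>)) \<and> in_short_arc L \<rho> (z + real m * \<delta>)
        \<and> (\<forall>j. 0 < j \<and> j \<le> m \<longrightarrow> \<not> real m * s \<le> z + real j * \<delta>)
        \<and> circle_rotate L' \<rho>' (z - real m * s) = circle_rotate L \<rho> (z + real m * \<delta>) - real m * s"
      if "real m * s \<le> z" "\<not> in_short_arc L' \<rho>' (z - real m * s)"
    proof (intro conjI allI impI)
      have below: "z - real m * s < s"
        using that(2) short' by simp
      show "\<not> in_short_arc L \<rho> (z + real j * \<delta>)" if "j < m" for j
        using fl(5)[OF that] \<open>real m * s \<le> z\<close> by (simp add: short shift_eq)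
      show "in_short_arc L \<rho> (z + real m * \<delta>)"
        using below by (simp add: short shift_eq)
      show "\<not> real m * s \<le> z + real j * \<delta>" if "0 < j \<and> j \<le> m" for j
        using fl(6)[of j] that below by (simp add: shift_eq)
      show "circle_rotate L' \<rho>' (z - real m * s) = circle_rotate L \<rho> (z + real m * \<delta>) - real m * s"
        unfolding rot rot' using below by (simp add: shift_eq \<rho>'_def)
    qed
    show "\<exists>i<m. in_short_arc L \<rho> (z + real i * \<delta>)" if "\<not> real m * s \<le> z"
    proof (intro exI conjI)
      show "m - 1 < m"
        using fl(1) by simp
      show "in_short_arc L \<rho> (z + real (m - 1) * \<delta>)"
        using that fl(1) by (simp add: short shift_eq of_nat_diff algebra_simps)
    qed
    show "real m * s \<le> circle_rotate L \<rho> z" if "in_short_arc L \<rho> z"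
      using that z ms by (simp add: short rot)
  qed
  then show ?thesis
    by (simp add: L'_def \<rho>'_def)
qed

lemma induction_step_left:
  assumes "L < 2 * \<rho>"
  shows "\<exists>C' Z' L' \<rho>'. rotation_coding f C' Z' L' \<rho>' (concat (replicate (nat \<lfloor>\<rho> / (L - \<rho>)\<rfloor>) u) @ v) u
    \<and> arc_ratio L' \<rho>' = frac (\<rho> / (L - \<rho>))"
proof -
  define s where "s = L - \<rho>"
  define m where "m = nat \<lfloor>\<rho> / s\<rfloor>"
  interpret induced: first_return f C Z L \<rho> u v "\<lambda>z. real m * s \<le> z" "real m * s" "L - real m * s"
    "\<rho> - real m * s" m
    unfolding m_def s_def by (rule first_return_left[OF assms])
  have "0 < s" "\<rho> / s \<notin> \<rat>" "1 < \<rho> / s"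
    using assms rho_less irrational by (simp_all add: s_def)
  note fl = irrational_floor_multiples[OF this(2,3,1), folded m_def]
  have "\<rho> - real m * s < s"
    using fl(3) \<open>0 < s\<close> by simp
  then have "arc_ratio (L - real m * s) (\<rho> - real m * s) = frac (\<rho> / s)"
    using \<open>0 < s\<close> fl(4) by (simp add: arc_ratio_def s_def field_simps)
  with induced.induced_rotation_coding show ?thesis
    unfolding m_def s_def by blast
qed

text \<open>
  Short arc \<open>[L - \<rho>, L)\<close>: off it the phase rises by \<open>\<rho>\<close>, and the first return to
  \<open>[0, L - m \<rho>)\<close> is a rotation of that interval by \<open>\<rho>\<close>.
\<close>
lemma first_return_right:
  assumes "\<not> L < 2 * \<rho>"
  defines "m \<equiv> nat \<lfloor>(L - \<rho>) / \<rho>\<rfloor>"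
  shows "first_return f C Z L \<rho> u v (\<lambda>z. z < L - real m * \<rho>) 0 (L - real m * \<rho>) \<rho> m"
proof -
  have "2 * \<rho> < L"
    using assms(1) L_neq_2rho by simp
  have q: "(L - \<rho>) / \<rho> \<notin> \<rat>"
    using irrational by (metis Rats_inverse inverse_divide)
  have "1 < (L - \<rho>) / \<rho>"
    using \<open>2 * \<rho> < L\<close> rho_pos by simp
  note fl = irrational_floor_multiples[OF q this rho_pos, folded m_def]
  have mt: "0 \<le> real m * \<rho>" "real m * \<rho> < L - \<rho>" "L - \<rho> < real m * \<rho> + \<rho>"
    using fl(2,3) rho_pos by simp_all
  have shift_eq: "\<delta> = \<rho>"
    using assms(1) by (simp add: \<delta>_def)
  have short: "in_short_arc L \<rho> z \<longleftrightarrow> L - \<rho> \<le> z" for z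
    using assms(1) by (simp add: in_short_arc_def)
  define L' where "L' = L - real m * \<rho>"
  define r where "r = L' - \<rho>"
  have r: "0 < r" "r < \<rho>"
    using mt by (simp_all add: r_def L'_def)
  have short': "in_short_arc L' \<rho> y \<longleftrightarrow> y < r" for y
    using r by (simp add: in_short_arc_def r_def)
  have rot': "circle_rotate L' \<rho> y = (if y < r then y + \<rho> else y - r)" for y
    by (simp add: circle_rotate_def r_def)
  have "first_return f C Z L \<rho> u v (\<lambda>z. z < L') 0 L' \<rho> m"
  proof (intro first_return.intro first_return_axioms.intro)
    show "rotation_coding f C Z L \<rho> u v"
      by (rule rotation_coding_axioms)
    show "0 < m" "0 < \<rho>" "\<rho> < L'"
      using fl(1) rho_pos r by (simp_all add: r_def)
    have "\<rho> / (L' - \<rho>) = inverse ((L - \<rho>) / \<rho> - real m)"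
      using rho_pos by (simp add: L'_def field_simps)
    then show "\<rho> / (L' - \<rho>) \<notin> \<rat>"
      using q by (metis Rats_diff_iff Rats_inverse_iff Rats_of_nat)
    fix z :: real
    assume z: "0 \<le> z" "z < L"
    show "z < L' \<Longrightarrow> 0 \<le> z - 0 \<and> z - 0 < L'"
      using z by simp
    show "\<not> in_short_arc L \<rho> z \<and> z + \<delta> < L' \<and> circle_rotate L' \<rho> (z - 0) = z + \<delta> - 0"
      if "z < L'" "in_short_arc L' \<rho> (z - 0)"
    proof -
      have "z < r"
        using that(2) short' by simp
      then show ?thesis
        unfolding rot' using mt(1) by (simp add: short shift_eq r_def L'_def)
    qed
    show "(\<forall>j<m. \<not> in_short_arc L \<rho> (z + real j * \<delta>)) \<and> in_short_arc L \<rho> (z + real m * \<delta>)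
        \<and> (\<forall>j. 0 < j \<and> j \<le> m \<longrightarrow> \<not> z + real j * \<delta> < L')
        \<and> circle_rotate L' \<rho> (z - 0) = circle_rotate L \<rho> (z + real m * \<delta>) - 0"
      if "z < L'" "\<not> in_short_arc L' \<rho> (z - 0)"
    proof (intro conjI allI impI)
      have above: "r \<le> z"
        using that(2) short' by simp
      show "\<not> in_short_arc L \<rho> (z + real j * \<delta>)" if "j < m" for j
        using fl(5)[OF that] \<open>z < L'\<close> by (simp add: short shift_eq L'_def)
      show "in_short_arc L \<rho> (z + real m * \<delta>)"
        using above by (simp add: short shift_eq r_def L'_def)
      show "\<not> z + real j * \<delta> < L'" if "0 < j \<and> j \<le> m" for j
        using fl(6)[of j] that above by (simp add: shift_eq r_def)
      show "circle_rotate L' \<rho> (z - 0) = circle_rotate L \<rho> (z + real m * \<delta>) - 0"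
        unfolding rot' using above by (simp add: circle_rotate_def shift_eq r_def L'_def)
    qed
    show "\<exists>i<m. in_short_arc L \<rho> (z + real i * \<delta>)" if "\<not> z < L'"
    proof (intro exI conjI)
      show "m - 1 < m"
        using fl(1) by simp
      show "in_short_arc L \<rho> (z + real (m - 1) * \<delta>)"
        using that fl(1) by (simp add: short shift_eq L'_def of_nat_diff algebra_simps)
    qed
    show "circle_rotate L \<rho> z < L'" if "in_short_arc L \<rho> z"
      using that z r by (simp add: short circle_rotate_def r_def)
  qed
  then show ?thesis
    by (simp add: L'_def)
qed

lemma induction_step_right:
  assumes "\<not> L < 2 * \<rho>"
  shows "\<exists>C' Z' L' \<rho>'. rotation_coding f C' Z' L' \<rho>' (concat (replicate (nat \<lfloor>(L - \<rho>) / \<rho>\<rfloor>) u) @ v) u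
    \<and> arc_ratio L' \<rho>' = frac ((L - \<rho>) / \<rho>)"
proof -
  define m where "m = nat \<lfloor>(L - \<rho>) / \<rho>\<rfloor>"
  interpret induced: first_return f C Z L \<rho> u v "\<lambda>z. z < L - real m * \<rho>" 0 "L - real m * \<rho>" \<rho> m
    unfolding m_def by (rule first_return_right[OF assms])
  have q: "(L - \<rho>) / \<rho> \<notin> \<rat>"
    using irrational by (metis Rats_inverse inverse_divide)
  have "1 < (L - \<rho>) / \<rho>"
    using assms L_neq_2rho rho_pos by simp
  note fl = irrational_floor_multiples[OF q this rho_pos, folded m_def]
  have "L - real m * \<rho> < 2 * \<rho>"
    using fl(3) rho_pos by simp
  then have "arc_ratio (L - real m * \<rho>) \<rho> = frac ((L - \<rho>) / \<rho>)"
    using rho_pos fl(4) by (simp add: arc_ratio_def field_simps)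
  with induced.induced_rotation_coding show ?thesis
    unfolding m_def by blast
qed

lemma induction_step:
  "\<exists>C' Z' L' \<rho>'. rotation_coding f C' Z' L' \<rho>' (concat (replicate (nat \<lfloor>1 / arc_ratio L \<rho>\<rfloor>) u) @ v) u
    \<and> arc_ratio L' \<rho>' = frac (1 / arc_ratio L \<rho>)"
  using induction_step_left induction_step_right by (cases "L < 2 * \<rho>") (simp_all add: arc_ratio_def)

end

section \<open>The cut sets of the Sturmian sequences\<close>

lemma rotation_coding_vseq:
  assumes "0 < \<alpha>" "\<alpha> < 1" "\<alpha> \<notin> \<rat>" "a \<noteq> b"
    and labels: "\<And>k. vseq \<alpha> \<theta> k = (if in_short_arc 1 \<alpha> (frac (of_int k * \<alpha> + \<theta>)) then b else a)"
  shows "rotation_coding (vseq \<alpha> \<theta>) UNIV (\<lambda>k. frac (of_int k * \<alpha> + \<theta>)) 1 \<alpha> [a] [b]"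
proof
  show "0 < \<alpha>" "\<alpha> < 1" "[a] \<noteq> []" "[b] \<noteq> []" "[a] \<noteq> [b]"
    using assms by simp_all
  show "\<alpha> / (1 - \<alpha>) \<notin> \<rat>"
  proof
    assume q: "\<alpha> / (1 - \<alpha>) \<in> \<rat>"
    have "\<alpha> = (\<alpha> / (1 - \<alpha>)) / (1 + \<alpha> / (1 - \<alpha>))"
      using assms(2) by (simp add: field_simps)
    also have "\<dots> \<in> \<rat>"
      using Rats_divide[OF q Rats_add[OF Rats_1 q]] .
    finally show False
      using assms(3) by simp
  qed
  fix k :: int
  show "0 \<le> frac (of_int k * \<alpha> + \<theta>) \<and> frac (of_int k * \<alpha> + \<theta>) < 1"
    by (simp add: frac_lt_1)
  show "block_at (vseq \<alpha> \<theta>) UNIV k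
      (if in_short_arc 1 \<alpha> (frac (of_int k * \<alpha> + \<theta>)) then [b] else [a])"
    using block_at_UNIV_singleton[of "vseq \<alpha> \<theta>" k] labels[of k] by (simp split: if_splits)
  have "frac (of_int (k + 1) * \<alpha> + \<theta>) = frac ((of_int k * \<alpha> + \<theta>) + \<alpha>)"
    by (simp add: algebra_simps)
  also have "\<dots> = circle_rotate 1 \<alpha> (frac (of_int k * \<alpha> + \<theta>))"
    using assms(1,2) by (simp add: frac_add frac_eq circle_rotate_def)
  finally show "frac (of_int (k + int (length (if in_short_arc 1 \<alpha> (frac (of_int k * \<alpha> + \<theta>))
      then [b] else [a]))) * \<alpha> + \<theta>) = circle_rotate 1 \<alpha> (frac (of_int k * \<alpha> + \<theta>))"
    by simp
next
  show "\<exists>k\<in>UNIV. k \<le> N" for N :: int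
    by auto
  show "D = UNIV" if "cut_set (vseq \<alpha> \<theta>) [a] [b] D" for D
    using cut_set_singletons[OF that] .
qed

lemma rotation_coding_level:
  assumes "0 < \<alpha>" "\<alpha> < 1" "\<alpha> \<notin> \<rat>" "0 < n"
  shows "\<exists>C Z L \<rho>. rotation_coding (vseq \<alpha> \<theta>) C Z L \<rho> (sw \<alpha> (n + 1)) (sw \<alpha> n)
    \<and> arc_ratio L \<rho> = cf_rem \<alpha> n"
  using \<open>0 < n\<close>
proof (induction n rule: nat_induct_non_zero)
  case 1
  have "(1 / 2 :: real) \<in> \<rat>"
    by simp
  then have "\<alpha> \<noteq> 1 / 2"
    using assms(3) by metis
  have "1 \<le> \<lfloor>1 / \<alpha>\<rfloor>"
    using assms(1,2) by (simp add: le_floor_iff)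
  have floor_minus_1: "\<lfloor>1 / \<alpha> - 1\<rfloor> = \<lfloor>1 / \<alpha>\<rfloor> - 1"
    by (metis floor_diff_of_int of_int_1)
  show ?case
  proof (cases "\<alpha> < 1 / 2")
    case True
    have "vseq \<alpha> \<theta> k = (if in_short_arc 1 \<alpha> (frac (of_int k * \<alpha> + \<theta>)) then 1 else 0)" for k
      using True by (simp add: vseq_def in_short_arc_def frac_lt_1)
    then interpret base: rotation_coding "vseq \<alpha> \<theta>" UNIV "\<lambda>k. frac (of_int k * \<alpha> + \<theta>)" 1 \<alpha> "[0]" "[1]"
      by (intro rotation_coding_vseq assms(1-3)) simp_all
    have ratio: "1 / arc_ratio 1 \<alpha> = 1 / \<alpha> - 1"
      using True assms(1) by (simp add: arc_ratio_def field_simps)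
    have "sw \<alpha> (1 + 1) = concat (replicate (nat \<lfloor>1 / arc_ratio 1 \<alpha>\<rfloor>) [0]) @ [1]"
      unfolding ratio using \<open>1 \<le> \<lfloor>1 / \<alpha>\<rfloor>\<close>
      by (simp add: cf_def floor_minus_1 nat_diff_distrib)
    moreover have "frac (1 / arc_ratio 1 \<alpha>) = cf_rem \<alpha> 1"
      unfolding ratio by (simp add: frac_def floor_minus_1)
    ultimately show ?thesis
      using base.induction_step by simp
  next
    case False
    txt \<open>Then \<open>a\<^sub>1 = 1\<close>, and level 1 is level 0 with the two words exchanged.\<close>
    then have "1 / 2 < \<alpha>"
      using \<open>\<alpha> \<noteq> 1 / 2\<close> by simp
    have "vseq \<alpha> \<theta> k = (if in_short_arc 1 \<alpha> (frac (of_int k * \<alpha> + \<theta>)) then 0 else 1)" for k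
      using \<open>1 / 2 < \<alpha>\<close> by (simp add: vseq_def in_short_arc_def frac_lt_1 not_less)
    then interpret base: rotation_coding "vseq \<alpha> \<theta>" UNIV "\<lambda>k. frac (of_int k * \<alpha> + \<theta>)" 1 \<alpha> "[1]" "[0]"
      by (intro rotation_coding_vseq assms(1-3)) simp_all
    have "1 / \<alpha> < 2"
      using \<open>1 / 2 < \<alpha>\<close> assms(1) by (simp add: field_simps)
    then have "\<lfloor>1 / \<alpha>\<rfloor> = 1"
      using \<open>1 \<le> \<lfloor>1 / \<alpha>\<rfloor>\<close> by (simp add: floor_eq_iff)
    then have "sw \<alpha> (1 + 1) = [1]" and "arc_ratio 1 \<alpha> = cf_rem \<alpha> 1"
      using \<open>1 / 2 < \<alpha>\<close> assms(1) by (simp_all add: cf_def arc_ratio_def frac_def field_simps)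
    then have "rotation_coding (vseq \<alpha> \<theta>) UNIV (\<lambda>k. frac (of_int k * \<alpha> + \<theta>)) 1 \<alpha> (sw \<alpha> (1 + 1)) (sw \<alpha> 1)"
      and "arc_ratio 1 \<alpha> = cf_rem \<alpha> 1"
      using base.rotation_coding_axioms by simp_all
    then show ?thesis
      by blast
  qed
next
  case (Suc n)
  then obtain C Z L \<rho> where coding: "rotation_coding (vseq \<alpha> \<theta>) C Z L \<rho> (sw \<alpha> (n + 1)) (sw \<alpha> n)"
    and ratio: "arc_ratio L \<rho> = cf_rem \<alpha> n"
    by blast
  interpret level: rotation_coding "vseq \<alpha> \<theta>" C Z L \<rho> "sw \<alpha> (n + 1)" "sw \<alpha> n"
    by (rule coding)
  obtain n' where n': "n = Suc n'"
    using Suc.hyps by (cases n) auto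
  have "sw \<alpha> (Suc n + 1) = concat (replicate (nat \<lfloor>1 / arc_ratio L \<rho>\<rfloor>) (sw \<alpha> (n + 1))) @ sw \<alpha> n"
    using ratio by (simp add: n' cf_def numeral_2_eq_2)
  moreover have "frac (1 / arc_ratio L \<rho>) = cf_rem \<alpha> (Suc n)"
    using ratio by simp
  ultimately show ?case
    using level.induction_step by simp
qed

lemma vseq_unique_cut_set:
  assumes "0 < \<alpha>" "\<alpha> < 1" "\<alpha> \<notin> \<rat>"
  shows "\<exists>C. cut_set (vseq \<alpha> \<theta>) (sword \<alpha> (int n)) (sword \<alpha> (int n - 1)) C
    \<and> (\<forall>D. cut_set (vseq \<alpha> \<theta>) (sword \<alpha> (int n)) (sword \<alpha> (int n - 1)) D \<longrightarrow> D = C)"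
proof (cases "n = 0")
  case True
  then have words: "sword \<alpha> (int n) = [0]" "sword \<alpha> (int n - 1) = [1]"
    by (simp_all add: sword_def)
  have "cut_set (vseq \<alpha> \<theta>) [0] [1] UNIV"
    by (rule cut_set_UNIV_singletons) (simp add: vseq_def)
  moreover have "D = UNIV" if "cut_set (vseq \<alpha> \<theta>) [0] [1] D" for D
    using cut_set_singletons[OF that] .
  ultimately show ?thesis
    unfolding words by blast
next
  case False
  then obtain C Z L \<rho> where "rotation_coding (vseq \<alpha> \<theta>) C Z L \<rho> (sw \<alpha> (n + 1)) (sw \<alpha> n)"
    using rotation_coding_level assms by blast
  then interpret level: rotation_coding "vseq \<alpha> \<theta>" C Z L \<rho> "sw \<alpha> (n + 1)" "sw \<alpha> n" .
  have words: "sword \<alpha> (int n) = sw \<alpha> (n + 1)" "sword \<alpha> (int n - 1) = sw \<alpha> n"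
    using False by (simp_all add: sword_def nat_add_distrib)
  show ?thesis
    unfolding words using level.cut_set level.unique by blast
qed

theorem lemma3p2:
  fixes \<alpha> :: real
  assumes "0 < \<alpha>" "\<alpha> < 1" "\<alpha> \<notin> \<rat>"
  shows "(\<forall>n::nat. \<exists>!p. is_partition n \<alpha> (vseq \<alpha> 0) (fst p) (snd p))
       \<and> (\<forall>n::nat. \<forall>\<theta>::real. 0 \<le> \<theta> \<and> \<theta> < 1 \<longrightarrow>
            (\<exists>!p. is_partition n \<alpha> (vseq \<alpha> \<theta>) (fst p) (snd p)))"
proof -
  have "\<exists>!p. is_partition n \<alpha> (vseq \<alpha> \<theta>) (fst p) (snd p)" for n \<theta>
  proof -
    obtain C where "cut_set (vseq \<alpha> \<theta>) (sword \<alpha> (int n)) (sword \<alpha> (int n - 1)) C"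
      and "\<And>D. cut_set (vseq \<alpha> \<theta>) (sword \<alpha> (int n)) (sword \<alpha> (int n - 1)) D \<Longrightarrow> D = C"
      using vseq_unique_cut_set[OF assms, of \<theta> n] by (elim exE conjE) blast
    then show ?thesis
      by (rule unique_cut_set_imp_unique_partition)
  qed
  then show ?thesis
    by simp
qed

end
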